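(* Let $m\geq 2$ be an integer and $n'=2^{m-1}$. Then the number of subgroups of the direct product $\mathbb{Z}_2\times D_{2n'}$ is $$|L(\mathbb{Z}_2\times D_{2n'})|=5\sigma(n')+3\tau(n')-2n'-1.$$
   Context: $L(G)$ denotes the set of all subgroups of a group $G$. $D_{2n'}=\langle x,y\mid x^{n'}=y^2=e,\ y^{-1}xy=x^{-1}\rangle$ is the dihedral group of order $2n'$ (for $n'=2$ this is the Klein four-group). For a positive integer $k$, $\tau(k)$ is the number of positive divisors of $k$ and $\sigma(k)$ is their sum. *)

theory Defs
  imports "HOL-Algebra.Algebra"
begin

text \<open>Dihedral group D_{2n} of order 2n: the element (i, a) stands for x^i y^a
  (0 <= i < n, a a boolean exponent of y), with x^n = y^2 = e and y^-1 x y = x^-1, so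
  (x^i y^a)(x^j y^b) = x^(i + (-1)^a j) y^(a+b).\<close>
definition dihedral_group :: "nat \<Rightarrow> (nat \<times> bool) monoid" where
  "dihedral_group n =
     \<lparr>carrier = {0..<n} \<times> UNIV,
      monoid.mult = (\<lambda>(i, a) (j, b). ((if a then i + n - j else i + j) mod n, a \<noteq> b)),
      one = (0, False)\<rparr>"

definition subgroup_lattice :: "('a, 'b) monoid_scheme \<Rightarrow> 'a set set" where
  "subgroup_lattice G = {H. subgroup H G}"

definition num_divisors :: "nat \<Rightarrow> nat" where
  "num_divisors k = card {d. d dvd k}"

definition sum_divisors :: "nat \<Rightarrow> nat" where
  "sum_divisors k = (\<Sum>d\<in>{d. d dvd k}. d)"

end

theory Submission
  imports Defs
begin

text \<open>Write \<open>x\<close> for the rotation and \<open>y\<close> for a reflection of \<open>D\<^sub>2\<^sub>n\<close>. For every \<open>n > 0\<close>, a subgroup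
  \<open>H\<close> of \<open>\<int>\<^sub>2 \<times> D\<^sub>2\<^sub>n\<close> is determined by three data: the divisor \<open>d\<close> of \<open>n\<close> with
  \<open>H \<inter> ({0} \<times> \<langle>x\<rangle>) = {0} \<times> \<langle>x\<^sup>d\<rangle>\<close>; whether \<open>H\<close> contains some \<open>(1, x\<^sup>j)\<close>, and if so \<open>j mod d\<close>,
  which satisfies \<open>d | 2j\<close>; and whether \<open>H\<close> contains a reflection \<open>(c, x\<^sup>r y)\<close>, and if so \<open>r mod d\<close>
  together with \<open>c\<close> (which is only relevant when there is no \<open>(1, x\<^sup>j)\<close>). Conversely all such data
  define distinct subgroups. So a divisor \<open>d\<close> contributes \<open>1 + 2d + t(1 + d)\<close> subgroups, where
  \<open>t \<in> {1, 2}\<close> counts the residues \<open>j\<close> with \<open>d | 2j\<close>, and summing over \<open>d = 2\<^sup>e\<close> gives the formula.\<close>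

lemma mult_dihedral_group [simp]:
  "(i, a) \<otimes>\<^bsub>dihedral_group n\<^esub> (j, b) = ((if a then i + n - j else i + j) mod n, a \<noteq> b)"
  by (simp add: dihedral_group_def)

lemma carrier_dihedral_group: "carrier (dihedral_group n) = {0..<n} \<times> UNIV"
  by (simp add: dihedral_group_def)

lemma one_dihedral_group [simp]: "\<one>\<^bsub>dihedral_group n\<^esub> = (0, False)"
  by (simp add: dihedral_group_def)

definition refl_sign :: "bool \<Rightarrow> int" where
  "refl_sign a = (if a then -1 else 1)"

lemma int_dihedral_rotation:
  assumes "j < n"
  shows "int ((if a then i + n - j else i + j) mod n) = (int i + refl_sign a * int j) mod int n"
proof (cases a)
  case True
  with assms have "int (i + n - j) = (int i - int j) + int n" by simp
  with True show ?thesis by (simp add: refl_sign_def zmod_int)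
qed (simp add: refl_sign_def zmod_int)

lemma dihedral_group_assoc:
  assumes "0 < n" "j < n" "k < n"
  shows "(i, a) \<otimes>\<^bsub>dihedral_group n\<^esub> (j, b) \<otimes>\<^bsub>dihedral_group n\<^esub> (k, c) =
    (i, a) \<otimes>\<^bsub>dihedral_group n\<^esub> ((j, b) \<otimes>\<^bsub>dihedral_group n\<^esub> (k, c))"
proof -
  let ?rot = "\<lambda>a i j. (if a then i + n - j else i + j) mod n"
  have sign_mult: "refl_sign (a \<noteq> b) = refl_sign a * refl_sign b"
    by (simp add: refl_sign_def)
  have "int (?rot (a \<noteq> b) (?rot a i j) k) = (int (?rot a i j) + refl_sign (a \<noteq> b) * int k) mod int n"
    using \<open>k < n\<close> by (rule int_dihedral_rotation)
  also have "\<dots> = (int i + refl_sign a * int j + refl_sign (a \<noteq> b) * int k) mod int n"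
    using \<open>j < n\<close> by (simp add: int_dihedral_rotation mod_add_left_eq)
  also have "\<dots> = (int i + refl_sign a * (int j + refl_sign b * int k)) mod int n"
    unfolding sign_mult by (simp add: algebra_simps)
  also have "\<dots> = (int i + refl_sign a * ((int j + refl_sign b * int k) mod int n)) mod int n"
    by (metis mod_add_right_eq mod_mult_right_eq)
  also have "\<dots> = int (?rot a i (?rot b j k))"
    using assms by (simp add: int_dihedral_rotation)
  finally show ?thesis by auto
qed

lemma group_dihedral_group:
  assumes "0 < n"
  shows "group (dihedral_group n)"
proof (rule groupI)
  fix x y assume "x \<in> carrier (dihedral_group n)" "y \<in> carrier (dihedral_group n)"
  with assms show "x \<otimes>\<^bsub>dihedral_group n\<^esub> y \<in> carrier (dihedral_group n)"
    by (cases x; cases y) (auto simp: carrier_dihedral_group)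
next
  fix x assume "x \<in> carrier (dihedral_group n)"
  then show "\<one>\<^bsub>dihedral_group n\<^esub> \<otimes>\<^bsub>dihedral_group n\<^esub> x = x"
    by (cases x) (auto simp: carrier_dihedral_group)
next
  fix x assume "x \<in> carrier (dihedral_group n)"
  then obtain i a where x: "x = (i, a)" "i < n" by (auto simp: carrier_dihedral_group)
  let ?y = "(if a then i else (n - i) mod n, a)"
  have "?y \<otimes>\<^bsub>dihedral_group n\<^esub> x = \<one>\<^bsub>dihedral_group n\<^esub>"
    using x assms by (simp add: mod_add_left_eq)
  moreover have "?y \<in> carrier (dihedral_group n)"
    using x assms by (simp add: carrier_dihedral_group)
  ultimately show "\<exists>y\<in>carrier (dihedral_group n). y \<otimes>\<^bsub>dihedral_group n\<^esub> x = \<one>\<^bsub>dihedral_group n\<^esub>"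
    by blast
next
  fix x y z
  assume "x \<in> carrier (dihedral_group n)" "y \<in> carrier (dihedral_group n)"
    "z \<in> carrier (dihedral_group n)"
  then obtain i a j b k c where "x = (i, a)" "y = (j, b)" "z = (k, c)" "j < n" "k < n"
    by (auto simp: carrier_dihedral_group)
  with assms show "x \<otimes>\<^bsub>dihedral_group n\<^esub> y \<otimes>\<^bsub>dihedral_group n\<^esub> z
      = x \<otimes>\<^bsub>dihedral_group n\<^esub> (y \<otimes>\<^bsub>dihedral_group n\<^esub> z)"
    by (simp only: dihedral_group_assoc)
qed (use assms in \<open>simp add: carrier_dihedral_group\<close>)

lemma inv_dihedral_group:
  assumes "x < n"
  shows "inv\<^bsub>dihedral_group n\<^esub> (x, a) = (if a then x else (n - x) mod n, a)"
proof (rule group.inv_equality[OF group_dihedral_group])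
  show "(if a then x else (n - x) mod n, a) \<otimes>\<^bsub>dihedral_group n\<^esub> (x, a) = \<one>\<^bsub>dihedral_group n\<^esub>"
    using assms by (simp add: mod_add_left_eq)
qed (use assms in \<open>auto simp: carrier_dihedral_group\<close>)

abbreviation Z2_dihedral :: "nat \<Rightarrow> (int \<times> nat \<times> bool) monoid" where
  "Z2_dihedral n \<equiv> integer_mod_group 2 \<times>\<times> dihedral_group n"

lemma mult_Z2_dihedral:
  "(c1, x1, a1) \<otimes>\<^bsub>Z2_dihedral n\<^esub> (c2, x2, a2) =
     ((c1 + c2) mod 2, (if a1 then x1 + n - x2 else x1 + x2) mod n, a1 \<noteq> a2)"
  by simp

lemma group_Z2_dihedral: "0 < n \<Longrightarrow> group (Z2_dihedral n)"
  by (simp add: DirProd_group group_dihedral_group)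

lemma inv_Z2_dihedral:
  assumes "0 \<le> c" "c < 2" "x < n"
  shows "inv\<^bsub>Z2_dihedral n\<^esub> (c, x, a) = (c, if a then x else (n - x) mod n, a)"
proof -
  have "c = 0 \<or> c = 1" using assms by auto
  then have "(- c) mod 2 = c" by auto
  with assms show ?thesis
    by (subst inv_DirProd) (simp_all add: group_dihedral_group inv_dihedral_group
        carrier_integer_mod_group carrier_dihedral_group)
qed

lemma (in group) subgroup_mult_mem_iff:
  assumes "subgroup H G" "g \<in> H" "h \<in> carrier G"
  shows "h \<otimes> g \<in> H \<longleftrightarrow> h \<in> H"
  by (metis assms inv_solve_right' subgroup.m_closed subgroup.m_inv_closed subgroup.mem_carrier)

context
  fixes n :: nat and K :: "nat set"
  assumes n: "0 < n" and zero: "0 \<in> K" and bounded: "K \<subseteq> {..<n}"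
    and add: "\<And>x y. x \<in> K \<Longrightarrow> y \<in> K \<Longrightarrow> (x + y) mod n \<in> K"
    and neg: "\<And>x. x \<in> K \<Longrightarrow> (n - x) mod n \<in> K"
begin

lemma mod_closed_multiple_mem: "d \<in> K \<Longrightarrow> (q * d) mod n \<in> K"
proof (induction q)
  case (Suc q)
  have "(Suc q * d) mod n = (d + (q * d) mod n) mod n"
    by (simp add: mod_add_right_eq)
  then show ?case using add[OF Suc.prems Suc.IH[OF Suc.prems]] by simp
qed (simp add: zero)

lemma mod_closed_diff_mem:
  assumes "x \<in> K" "y \<in> K" "y \<le> x"
  shows "x - y \<in> K"
proof (cases "y = 0")
  case False
  have "x < n" "y < n" using bounded assms by auto
  with False \<open>y \<le> x\<close> have "x + (n - y) mod n = (x - y) + n" by simp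
  with \<open>x < n\<close> have "(x + (n - y) mod n) mod n = x - y" by simp
  then show ?thesis using add[OF assms(1) neg[OF assms(2)]] by simp
qed (use assms in simp)

lemma mod_closed_mod_mem:
  assumes "d \<in> K" "x \<in> K"
  shows "x mod d \<in> K"
proof -
  have "x < n" using bounded assms(2) by auto
  then have "x div d * d < n"
    using div_times_less_eq_dividend[of x d] by linarith
  then have "x div d * d \<in> K"
    using mod_closed_multiple_mem[OF assms(1), of "x div d"] by simp
  then show ?thesis
    using mod_closed_diff_mem[OF assms(2), of "x div d * d"] div_times_less_eq_dividend[of x d]
    by (simp add: minus_div_mult_eq_mod)
qed

lemma mod_closed_eq_multiples:
  obtains d where "d dvd n" "0 < d" "K = {x. x < n \<and> d dvd x}"
proof -
  define d where "d = Min (insert n (K - {0}))"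
  have fin: "finite (insert n (K - {0}))"
    using finite_subset[OF bounded] by blast
  have d_pos: "0 < d" and d_min: "\<And>x. x \<in> K \<Longrightarrow> 0 < x \<Longrightarrow> d \<le> x"
    using fin n Min_in[OF fin] by (auto simp: d_def)
  have d_cases: "d = n \<or> d \<in> K"
    using Min_in[OF fin] by (auto simp: d_def)
  have below_n: "x < n" if "x \<in> K" for x
    using bounded that by auto
  have mod_mem: "x mod d \<in> K" if "x \<in> K" for x
    using d_cases mod_closed_mod_mem[OF _ that] that below_n by auto
  \<comment> \<open>\<open>x mod d \<in> K\<close> is smaller than the least positive element \<open>d\<close> of \<open>K\<close>, hence 0.\<close>
  have dvd_of_mem: "d dvd x" if "x \<in> K" for x
    using d_min[OF mod_mem[OF that]] mod_less_divisor[OF d_pos, of x] by fastforce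
  have "d dvd n"
    using d_cases
  proof
    assume "d \<in> K"
    have "(n - d) mod n = n - d" using d_pos n by simp
    then have "d dvd n - d" using dvd_of_mem[OF neg[OF \<open>d \<in> K\<close>]] by simp
    then have "d dvd (n - d) + d" by simp
    then show "d dvd n" using below_n[OF \<open>d \<in> K\<close>] by simp
  qed simp
  moreover have "K = {x. x < n \<and> d dvd x}"
  proof (intro subset_antisym subsetI)
    fix x assume "x \<in> K"
    then show "x \<in> {x. x < n \<and> d dvd x}" using dvd_of_mem below_n by auto
  next
    fix x assume "x \<in> {x. x < n \<and> d dvd x}"
    then obtain q where x: "x = q * d" "x < n" by (metis (mono_tags) dvdE mem_Collect_eq mult.commute)
    show "x \<in> K"
      using d_cases
    proof
      assume "d \<in> K"
      then show ?thesis using mod_closed_multiple_mem[of d q] x by simp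
    qed (use x zero in simp)
  qed
  ultimately show ?thesis using that d_pos by blast
qed

end

definition twist :: "int option \<Rightarrow> int" where
  "twist \<alpha> = (case \<alpha> of None \<Rightarrow> 0 | Some j \<Rightarrow> j)"

text \<open>The parameter \<open>(d, \<alpha>, \<beta>)\<close> describes the subgroup containing \<open>(0, x\<^sup>i)\<close> iff \<open>d\<close> divides \<open>i\<close>,
  containing \<open>(1, x\<^sup>j)\<close> iff \<open>\<alpha> = Some j\<close> (up to multiples of \<open>d\<close>), and containing the reflection
  \<open>(c\<^sub>0, x\<^sup>r y)\<close> iff \<open>\<beta> = Some (c\<^sub>0, r)\<close>; when \<open>\<alpha> \<noteq> None\<close> the component \<open>c\<^sub>0\<close> is normalised to 0.\<close>

definition param_subgroup ::
    "nat \<Rightarrow> nat \<times> int option \<times> (int \<times> int) option \<Rightarrow> (int \<times> nat \<times> bool) set" where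
  "param_subgroup n = (\<lambda>(d, \<alpha>, \<beta>). {(c, x, a). 0 \<le> c \<and> c < 2 \<and> x < n \<and>
     (if a then (case \<beta> of
                   None \<Rightarrow> False
                 | Some (c0, r) \<Rightarrow> (\<alpha> = None \<longrightarrow> c = c0) \<and> int d dvd int x - r - c * twist \<alpha>)
      else (\<alpha> = None \<longrightarrow> c = 0) \<and> int d dvd int x - c * twist \<alpha>)})"

definition half_turns :: "nat \<Rightarrow> int set" where
  "half_turns d = {j. 0 \<le> j \<and> j < int d \<and> int d dvd 2 * j}"

definition twist_params :: "nat \<Rightarrow> int option set" where
  "twist_params d = insert None (Some ` half_turns d)"

definition reflection_params :: "nat \<Rightarrow> int option \<Rightarrow> (int \<times> int) option set" where
  "reflection_params d \<alpha> = insert None (Some ` ({0..<(if \<alpha> = None then 2 else 1)} \<times> {0..<int d}))"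

definition subgroup_params :: "nat \<Rightarrow> (nat \<times> int option \<times> (int \<times> int) option) set" where
  "subgroup_params n = (SIGMA d:{d. d dvd n}. SIGMA \<alpha>:twist_params d. reflection_params d \<alpha>)"

lemma mem_param_subgroup_rotation:
  "(c, x, False) \<in> param_subgroup n (d, \<alpha>, \<beta>) \<longleftrightarrow>
     0 \<le> c \<and> c < 2 \<and> x < n \<and> (\<alpha> = None \<longrightarrow> c = 0) \<and> int d dvd int x - c * twist \<alpha>"
  by (simp add: param_subgroup_def)

lemma reflection_not_mem_param_subgroup: "(c, x, True) \<notin> param_subgroup n (d, \<alpha>, None)"
  by (simp add: param_subgroup_def)

lemma mem_param_subgroup_Some:
  "(c, x, a) \<in> param_subgroup n (d, \<alpha>, Some (c0, r)) \<longleftrightarrow>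
     0 \<le> c \<and> c < 2 \<and> x < n \<and> (\<alpha> = None \<longrightarrow> c = (if a then c0 else 0)) \<and>
     int d dvd int x - (if a then r else 0) - c * twist \<alpha>"
  by (simp add: param_subgroup_def)

lemma param_subgroup_None:
  "param_subgroup n (d, \<alpha>, None) = param_subgroup n (d, \<alpha>, Some (0, 0)) \<inter> {u. \<not> snd (snd u)}"
  by (auto simp: param_subgroup_def)

lemma mem_subgroup_params:
  "(d, \<alpha>, \<beta>) \<in> subgroup_params n \<longleftrightarrow> d dvd n \<and> \<alpha> \<in> twist_params d \<and> \<beta> \<in> reflection_params d \<alpha>"
  by (simp add: subgroup_params_def)

lemma dvd_twist_params: "\<alpha> \<in> twist_params d \<Longrightarrow> int d dvd 2 * twist \<alpha>"
  by (auto simp: twist_params_def half_turns_def twist_def)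

lemma dvd_dihedral_rotation:
  assumes "d dvd n" "j < n"
  shows "int d dvd int ((if a then i + n - j else i + j) mod n) - (int i + refl_sign a * int j)"
proof -
  have "int n dvd (int i + refl_sign a * int j) mod int n - (int i + refl_sign a * int j)"
    by (rule mod_eq_dvd_iff[THEN iffD1]) simp
  then show ?thesis
    using assms by (simp add: int_dihedral_rotation dvd_trans[of "int d" "int n"])
qed

lemma bit_add_mod_2:
  fixes a b :: int
  assumes "0 \<le> a" "a < 2" "0 \<le> b" "b < 2"
  shows "(a + b) mod 2 = a + b - 2 * a * b"
proof -
  have "a = 0 \<or> a = 1" "b = 0 \<or> b = 1" using assms by auto
  then show ?thesis by auto
qed

lemma param_subgroup_Some_mult_closed:
  assumes "d dvd n" "int d dvd 2 * twist \<alpha>" "0 \<le> c0" "c0 < 2"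
    and u: "u \<in> param_subgroup n (d, \<alpha>, Some (c0, r))"
    and v: "v \<in> param_subgroup n (d, \<alpha>, Some (c0, r))"
  shows "u \<otimes>\<^bsub>Z2_dihedral n\<^esub> v \<in> param_subgroup n (d, \<alpha>, Some (c0, r))"
proof -
  obtain c1 x1 a1 c2 x2 a2 where uv: "u = (c1, x1, a1)" "v = (c2, x2, a2)"
    by (cases u; cases v) auto
  let ?j = "twist \<alpha>" and ?\<rho> = "\<lambda>a. if a then r else 0"
  let ?x = "(if a1 then x1 + n - x2 else x1 + x2) mod n"
  have u': "0 \<le> c1" "c1 < 2" "x1 < n" "\<alpha> = None \<longrightarrow> c1 = (if a1 then c0 else 0)"
    "int d dvd int x1 - ?\<rho> a1 - c1 * ?j"
    using u by (simp_all add: uv mem_param_subgroup_Some)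
  have v': "0 \<le> c2" "c2 < 2" "x2 < n" "\<alpha> = None \<longrightarrow> c2 = (if a2 then c0 else 0)"
    "int d dvd int x2 - ?\<rho> a2 - c2 * ?j"
    using v by (simp_all add: uv mem_param_subgroup_Some)
  have c: "(c1 + c2) mod 2 = c1 + c2 - 2 * c1 * c2"
    using u' v' by (simp add: bit_add_mod_2)
  have "\<alpha> = None \<longrightarrow> (c1 + c2) mod 2 = (if a1 \<noteq> a2 then c0 else 0)"
    using u'(4) v'(4) assms(3,4) by (cases a1; cases a2) auto
  moreover
  \<comment> \<open>The twist cancels up to multiples of \<open>2 j\<close>, which \<open>d\<close> divides.\<close>
  have eq: "int ?x - ?\<rho> (a1 \<noteq> a2) - (c1 + c2) mod 2 * ?j =
      (int ?x - (int x1 + refl_sign a1 * int x2)) + (int x1 - ?\<rho> a1 - c1 * ?j)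
      + refl_sign a1 * (int x2 - ?\<rho> a2 - c2 * ?j) + (c1 * c2 - (if a1 then c2 else 0)) * (2 * ?j)"
    unfolding c by (cases a1; cases a2) (simp_all add: refl_sign_def algebra_simps)
  have "int d dvd int ?x - ?\<rho> (a1 \<noteq> a2) - (c1 + c2) mod 2 * ?j"
    unfolding eq
    by (intro dvd_add dvd_mult dvd_dihedral_rotation[OF assms(1) v'(3)] u'(5) v'(5) assms(2))
  ultimately show ?thesis
    using u' v' by (simp add: uv mem_param_subgroup_Some)
qed

lemma param_subgroup_Some_inv_closed:
  assumes "d dvd n" "int d dvd 2 * twist \<alpha>"
    and u: "(c, x, a) \<in> param_subgroup n (d, \<alpha>, Some (c0, r))"
  shows "(c, if a then x else (n - x) mod n, a) \<in> param_subgroup n (d, \<alpha>, Some (c0, r))"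
proof (cases a)
  case False
  let ?j = "twist \<alpha>"
  have u': "0 \<le> c" "c < 2" "x < n" "\<alpha> = None \<longrightarrow> c = 0" "int d dvd int x - c * ?j"
    using u False by (simp_all add: mem_param_subgroup_Some)
  have neg: "int d dvd int ((n - x) mod n) + int x"
    using dvd_dihedral_rotation[OF assms(1) u'(3), of True 0] by (simp add: refl_sign_def)
  have eq: "int ((n - x) mod n) - c * ?j = (int ((n - x) mod n) + int x) - (int x - c * ?j) - c * (2 * ?j)"
    by (simp add: algebra_simps)
  have "int d dvd int ((n - x) mod n) - c * ?j"
    unfolding eq by (intro dvd_diff dvd_mult neg u'(5) assms(2))
  with u' False show ?thesis by (simp add: mem_param_subgroup_Some)
qed (use u in simp)

lemma Some_mem_reflection_params:
  "Some (c0, r) \<in> reflection_params d \<alpha> \<longleftrightarrow>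
     0 \<le> c0 \<and> c0 < (if \<alpha> = None then 2 else 1) \<and> 0 \<le> r \<and> r < int d"
  by (auto simp: reflection_params_def)

lemma param_subgroup_mult_closed:
  assumes p: "(d, \<alpha>, \<beta>) \<in> subgroup_params n"
    and u: "u \<in> param_subgroup n (d, \<alpha>, \<beta>)" and v: "v \<in> param_subgroup n (d, \<alpha>, \<beta>)"
  shows "u \<otimes>\<^bsub>Z2_dihedral n\<^esub> v \<in> param_subgroup n (d, \<alpha>, \<beta>)"
proof -
  have d: "d dvd n" "int d dvd 2 * twist \<alpha>"
    using p by (auto simp: mem_subgroup_params dvd_twist_params)
  show ?thesis
  proof (cases \<beta>)
    case None
    then have "u \<otimes>\<^bsub>Z2_dihedral n\<^esub> v \<in> param_subgroup n (d, \<alpha>, Some (0, 0))"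
      using u v by (intro param_subgroup_Some_mult_closed[OF d]) (simp_all add: param_subgroup_None)
    moreover have "\<not> snd (snd (u \<otimes>\<^bsub>Z2_dihedral n\<^esub> v))"
      using u v None by (cases u; cases v) (simp add: param_subgroup_None)
    ultimately show ?thesis using None by (simp add: param_subgroup_None)
  next
    case (Some cr)
    then obtain c0 r where "\<beta> = Some (c0, r)" by (cases cr) auto
    moreover from p this have "0 \<le> c0" "c0 < 2"
      by (auto simp: mem_subgroup_params Some_mem_reflection_params split: if_splits)
    ultimately show ?thesis using u v param_subgroup_Some_mult_closed[OF d] by simp
  qed
qed

lemma param_subgroup_inv_closed:
  assumes p: "(d, \<alpha>, \<beta>) \<in> subgroup_params n"
    and u: "(c, x, a) \<in> param_subgroup n (d, \<alpha>, \<beta>)"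
  shows "(c, if a then x else (n - x) mod n, a) \<in> param_subgroup n (d, \<alpha>, \<beta>)"
proof -
  have d: "d dvd n" "int d dvd 2 * twist \<alpha>"
    using p by (auto simp: mem_subgroup_params dvd_twist_params)
  show ?thesis
  proof (cases \<beta>)
    case None
    with u have a: "\<not> a" and u0: "(c, x, a) \<in> param_subgroup n (d, \<alpha>, Some (0, 0))"
      by (auto simp: param_subgroup_None)
    have "(c, if a then x else (n - x) mod n, a) \<in> param_subgroup n (d, \<alpha>, Some (0, 0))"
      by (rule param_subgroup_Some_inv_closed[OF d u0])
    with a None show ?thesis by (simp add: param_subgroup_None)
  next
    case (Some cr)
    with u show ?thesis by (cases cr) (simp add: param_subgroup_Some_inv_closed[OF d])
  qed
qed

lemma subgroup_param_subgroup:
  assumes "0 < n" and p: "p \<in> subgroup_params n"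
  shows "subgroup (param_subgroup n p) (Z2_dihedral n)"
proof
  show "param_subgroup n p \<subseteq> carrier (Z2_dihedral n)"
    by (auto simp: param_subgroup_def carrier_integer_mod_group carrier_dihedral_group)
next
  fix u v assume "u \<in> param_subgroup n p" "v \<in> param_subgroup n p"
  then show "u \<otimes>\<^bsub>Z2_dihedral n\<^esub> v \<in> param_subgroup n p"
    using param_subgroup_mult_closed p by (cases p) blast
next
  show "\<one>\<^bsub>Z2_dihedral n\<^esub> \<in> param_subgroup n p"
    using assms(1) by (cases p) (simp add: mem_param_subgroup_rotation)
next
  fix u assume u: "u \<in> param_subgroup n p"
  obtain c x a where "u = (c, x, a)" "0 \<le> c" "c < 2" "x < n"
    using u by (cases u) (auto simp: param_subgroup_def)
  then show "inv\<^bsub>Z2_dihedral n\<^esub> u \<in> param_subgroup n p"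
    using param_subgroup_inv_closed p u by (cases p) (simp add: inv_Z2_dihedral)
qed

lemma eq_of_dvd_diff_int:
  fixes a b d :: int
  assumes "0 \<le> a" "a < d" "0 \<le> b" "b < d" "d dvd a - b"
  shows "a = b"
  using assms by (metis mod_eq_dvd_iff mod_pos_pos_trivial)

lemma divisor_eq_of_same_multiples:
  fixes n d1 d2 :: nat
  assumes "0 < n" "d1 dvd n" "d2 dvd n" "\<And>x. x < n \<Longrightarrow> d1 dvd x \<longleftrightarrow> d2 dvd x"
  shows "d1 = d2"
proof -
  have "a dvd b" if "a dvd n" "b dvd n" "\<And>x. x < n \<Longrightarrow> a dvd x \<longleftrightarrow> b dvd x" for a b
  proof (cases "b < n")
    case False
    with that(2) assms(1) have "b = n" using dvd_imp_le by fastforce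
    with that(1) show ?thesis by simp
  qed (use that in simp)
  from this[OF assms(2,3)] this[OF assms(3,2)] show ?thesis
    using assms(4) by (simp add: dvd_antisym)
qed

lemma param_subgroup_twist_mono:
  assumes "0 < n" "(d, \<alpha>1, \<beta>1) \<in> subgroup_params n" "(d, \<alpha>2, \<beta>2) \<in> subgroup_params n"
    and sub: "param_subgroup n (d, \<alpha>1, \<beta>1) \<subseteq> param_subgroup n (d, \<alpha>2, \<beta>2)"
    and \<alpha>1: "\<alpha>1 = Some j"
  shows "\<alpha>2 = Some j"
proof -
  have j: "0 \<le> j" "j < int d" and "d dvd n"
    using assms(2) \<alpha>1 by (auto simp: mem_subgroup_params twist_params_def half_turns_def)
  then have "nat j < n"
    using dvd_imp_le[OF \<open>d dvd n\<close> assms(1)] by linarith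
  with j \<alpha>1 have "(1, nat j, False) \<in> param_subgroup n (d, \<alpha>1, \<beta>1)"
    by (simp add: mem_param_subgroup_rotation twist_def)
  with sub have mem: "(1, nat j, False) \<in> param_subgroup n (d, \<alpha>2, \<beta>2)" by blast
  then obtain j2 where \<alpha>2: "\<alpha>2 = Some j2"
    by (cases \<alpha>2) (auto simp: mem_param_subgroup_rotation)
  have "0 \<le> j2" "j2 < int d"
    using assms(3) \<alpha>2 by (auto simp: mem_subgroup_params twist_params_def half_turns_def)
  moreover have "int d dvd j - j2"
    using mem \<alpha>2 j by (simp add: mem_param_subgroup_rotation twist_def)
  ultimately have "j = j2" by (rule eq_of_dvd_diff_int[OF j])
  with \<alpha>2 show ?thesis by simp
qed

lemma param_subgroup_reflection_mono:
  assumes "0 < n" and p1: "(d, \<alpha>, \<beta>1) \<in> subgroup_params n" and p2: "(d, \<alpha>, \<beta>2) \<in> subgroup_params n"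
    and sub: "param_subgroup n (d, \<alpha>, \<beta>1) \<subseteq> param_subgroup n (d, \<alpha>, \<beta>2)"
    and \<beta>1: "\<beta>1 = Some (c0, r)"
  shows "\<beta>2 = Some (c0, r)"
proof -
  have c0: "0 \<le> c0" "c0 < (if \<alpha> = None then 2 else 1)" and r: "0 \<le> r" "r < int d" and "d dvd n"
    using p1 \<beta>1 by (simp_all add: mem_subgroup_params Some_mem_reflection_params)
  have no_twist: "c0 * twist \<alpha> = 0"
    using c0 by (cases \<alpha>) (auto simp: twist_def)
  have "nat r < n" "c0 < 2"
    using r c0 dvd_imp_le[OF \<open>d dvd n\<close> assms(1)] by (auto split: if_splits)
  with c0 r \<beta>1 have "(c0, nat r, True) \<in> param_subgroup n (d, \<alpha>, \<beta>1)"
    by (simp add: mem_param_subgroup_Some no_twist)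
  with sub have mem: "(c0, nat r, True) \<in> param_subgroup n (d, \<alpha>, \<beta>2)" by blast
  then obtain c0' r' where \<beta>2: "\<beta>2 = Some (c0', r')"
    by (cases \<beta>2) (auto simp: reflection_not_mem_param_subgroup)
  have c0': "0 \<le> c0'" "c0' < (if \<alpha> = None then 2 else 1)" and r': "0 \<le> r'" "r' < int d"
    using p2 \<beta>2 by (simp_all add: mem_subgroup_params Some_mem_reflection_params)
  have "\<alpha> = None \<longrightarrow> c0 = c0'" "int d dvd r - r'"
    using mem \<beta>2 r no_twist by (simp_all add: mem_param_subgroup_Some)
  moreover have "\<alpha> \<noteq> None \<longrightarrow> c0 = c0'"
    using c0 c0' by auto
  ultimately show ?thesis
    using eq_of_dvd_diff_int[OF r r'] \<beta>2 by auto
qed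

lemma inj_on_param_subgroup:
  assumes "0 < n"
  shows "inj_on (param_subgroup n) (subgroup_params n)"
proof (rule inj_onI)
  fix p1 p2
  assume p1: "p1 \<in> subgroup_params n" and p2: "p2 \<in> subgroup_params n"
    and eq: "param_subgroup n p1 = param_subgroup n p2"
  obtain d1 \<alpha>1 \<beta>1 d2 \<alpha>2 \<beta>2 where p: "p1 = (d1, \<alpha>1, \<beta>1)" "p2 = (d2, \<alpha>2, \<beta>2)"
    by (cases p1; cases p2) auto
  have "d1 = d2"
  proof (rule divisor_eq_of_same_multiples[OF assms])
    show "d1 dvd n" "d2 dvd n" using p1 p2 p by (simp_all add: mem_subgroup_params)
    fix x assume "x < n"
    have "(0, x, False) \<in> param_subgroup n p1 \<longleftrightarrow> (0, x, False) \<in> param_subgroup n p2"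
      using eq by simp
    with \<open>x < n\<close> p show "d1 dvd x \<longleftrightarrow> d2 dvd x"
      by (simp add: mem_param_subgroup_rotation)
  qed
  have "\<alpha>1 = Some j \<longleftrightarrow> \<alpha>2 = Some j" for j
    using param_subgroup_twist_mono[OF assms] p1 p2 eq p \<open>d1 = d2\<close> by blast
  then have "\<alpha>1 = \<alpha>2" by (metis not_None_eq)
  have "\<beta>1 = Some cr \<longleftrightarrow> \<beta>2 = Some cr" for cr
    using param_subgroup_reflection_mono[OF assms] p1 p2 eq p \<open>d1 = d2\<close> \<open>\<alpha>1 = \<alpha>2\<close>
    by (cases cr) blast
  then have "\<beta>1 = \<beta>2" by (metis not_None_eq)
  with p \<open>d1 = d2\<close> \<open>\<alpha>1 = \<alpha>2\<close> show "p1 = p2" by simp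
qed

lemma dvd_iff_dvd_of_dvd_diff:
  fixes d a b :: int
  assumes "d dvd a - b"
  shows "d dvd a \<longleftrightarrow> d dvd b"
  using dvd_diff_left_iff[OF assms, of a] by simp

locale Z2_dihedral_subgroup =
  fixes n :: nat and H :: "(int \<times> nat \<times> bool) set"
  assumes n_pos: "0 < n" and subgroup: "subgroup H (Z2_dihedral n)"
begin

lemma mem_bounds: "(c, x, a) \<in> H \<Longrightarrow> 0 \<le> c \<and> c < 2 \<and> x < n"
  using subgroup.subset[OF subgroup] by (force simp: carrier_integer_mod_group carrier_dihedral_group)

lemma mult_mem:
  "(c1, x1, a1) \<in> H \<Longrightarrow> (c2, x2, a2) \<in> H \<Longrightarrow>
     ((c1 + c2) mod 2, (if a1 then x1 + n - x2 else x1 + x2) mod n, a1 \<noteq> a2) \<in> H"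
  using subgroup.m_closed[OF subgroup] by (metis mult_Z2_dihedral)

lemma inv_mem: "(c, x, a) \<in> H \<Longrightarrow> (c, if a then x else (n - x) mod n, a) \<in> H"
  using subgroup.m_inv_closed[OF subgroup] mem_bounds by (metis inv_Z2_dihedral)

lemma mult_mem_iff:
  assumes "(c1, x1, a1) \<in> H" "0 \<le> c" "c < 2" "x < n"
  shows "((c + c1) mod 2, (if a then x + n - x1 else x + x1) mod n, a \<noteq> a1) \<in> H \<longleftrightarrow> (c, x, a) \<in> H"
  using group.subgroup_mult_mem_iff[OF group_Z2_dihedral[OF n_pos] subgroup assms(1), of "(c, x, a)"]
    assms(2-4)
  by (simp add: carrier_integer_mod_group carrier_dihedral_group)

lemma rotation_kernel:
  obtains d where "d dvd n" "0 < d" "\<And>x. (0, x, False) \<in> H \<longleftrightarrow> x < n \<and> d dvd x"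
proof -
  let ?K = "{x. (0, x, False) \<in> H}"
  have zero: "0 \<in> ?K"
    using subgroup.one_closed[OF subgroup] by simp
  have bounded: "?K \<subseteq> {..<n}"
    using mem_bounds by auto
  have add: "(x + y) mod n \<in> ?K" if "x \<in> ?K" "y \<in> ?K" for x y
    using mult_mem[of 0 x False 0 y False] that by simp
  have neg: "(n - x) mod n \<in> ?K" if "x \<in> ?K" for x
    using inv_mem[of 0 x False] that by simp
  obtain d where "d dvd n" "0 < d" "?K = {x. x < n \<and> d dvd x}"
    by (rule mod_closed_eq_multiples[OF n_pos zero bounded add neg])
  then show thesis by (intro that) auto
qed

context
  fixes d :: nat
  assumes d: "d dvd n" "0 < d" and kernel: "\<And>x. (0, x, False) \<in> H \<longleftrightarrow> x < n \<and> d dvd x"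
begin

lemma twist_mem_half_turns:
  assumes x1: "(1, x1, False) \<in> H"
  shows "int x1 mod int d \<in> half_turns d"
proof -
  have "(0, (x1 + x1) mod n, False) \<in> H"
    using mult_mem[OF x1 x1] by simp
  then have "d dvd x1 + x1"
    using kernel dvd_mod_iff[OF d(1)] by simp
  then have "int d dvd 2 * int x1"
    by (metis int_dvd_int_iff mult_2 of_nat_add)
  then have "int d dvd 2 * (int x1 mod int d)"
    by (simp add: dvd_eq_mod_eq_0 mod_mult_right_eq)
  with d(2) show ?thesis
    by (simp add: half_turns_def)
qed

lemma twisted_rotation_mem_iff:
  assumes x1: "(1, x1, False) \<in> H" and "y < n"
  shows "(1, y, False) \<in> H \<longleftrightarrow> int d dvd int y - int x1 mod int d"
proof -
  have "(1, y, False) \<in> H \<longleftrightarrow> (0, (y + x1) mod n, False) \<in> H"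
    using mult_mem_iff[OF x1, of 1 y False] \<open>y < n\<close> by simp
  also have "\<dots> \<longleftrightarrow> int d dvd int y + int x1"
    using kernel dvd_mod_iff[OF d(1)] n_pos by (simp flip: of_nat_add)
  also have "\<dots> \<longleftrightarrow> int d dvd int y - int x1 mod int d"
  proof (rule dvd_iff_dvd_of_dvd_diff)
    \<comment> \<open>\<open>x1 + (x1 mod d) \<equiv> 2 (x1 mod d) \<equiv> 0 (mod d)\<close>\<close>
    have "int d dvd 2 * (int x1 mod int d)"
      using twist_mem_half_turns[OF x1] by (simp add: half_turns_def)
    moreover have "int d dvd int x1 mod int d - int x1"
      by (rule mod_eq_dvd_iff[THEN iffD1]) simp
    ultimately have "int d dvd 2 * (int x1 mod int d) - (int x1 mod int d - int x1)"
      by (rule dvd_diff)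
    then show "int d dvd (int y + int x1) - (int y - int x1 mod int d)"
      by (simp add: algebra_simps)
  qed
  finally show ?thesis .
qed

lemma rotations:
  obtains \<alpha> where "\<alpha> \<in> twist_params d"
    "\<And>c x \<beta>. (c, x, False) \<in> H \<longleftrightarrow> (c, x, False) \<in> param_subgroup n (d, \<alpha>, \<beta>)"
proof (cases "\<exists>x. (1, x, False) \<in> H")
  case False
  have "(c, x, False) \<in> H \<longleftrightarrow> (c, x, False) \<in> param_subgroup n (d, None, \<beta>)" for c x \<beta>
  proof -
    consider "c = 0" | "c = 1" | "\<not> (0 \<le> c \<and> c < 2)" by linarith
    then show ?thesis
      by cases (use kernel False mem_bounds in \<open>auto simp: mem_param_subgroup_rotation twist_def\<close>)
  qed
  then show thesis by (intro that[of None]) (simp_all add: twist_params_def)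
next
  case True
  then obtain x1 where x1: "(1, x1, False) \<in> H" by blast
  let ?j = "int x1 mod int d"
  have twisted: "(1, x, False) \<in> H \<longleftrightarrow> x < n \<and> int d dvd int x - ?j" for x
    using twisted_rotation_mem_iff[OF x1, of x] mem_bounds[of 1 x False] by blast
  have "(c, x, False) \<in> H \<longleftrightarrow> (c, x, False) \<in> param_subgroup n (d, Some ?j, \<beta>)" for c x \<beta>
  proof -
    consider "c = 0" | "c = 1" | "\<not> (0 \<le> c \<and> c < 2)" by linarith
    then show ?thesis
      by cases (use kernel twisted mem_bounds in
          \<open>auto simp: mem_param_subgroup_rotation twist_def\<close>)
  qed
  moreover have "Some ?j \<in> twist_params d"
    using twist_mem_half_turns[OF x1] by (simp add: twist_params_def)
  ultimately show thesis by (intro that)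
qed

lemma reflection_mem_iff:
  assumes \<alpha>: "\<alpha> \<in> twist_params d"
    and rotations: "\<And>c x \<beta>. (c, x, False) \<in> H \<longleftrightarrow> (c, x, False) \<in> param_subgroup n (d, \<alpha>, \<beta>)"
    and t: "(c1, x1, True) \<in> H" and bounds: "0 \<le> c" "c < 2" "y < n"
  shows "(c, y, True) \<in> H \<longleftrightarrow>
    (\<alpha> = None \<longrightarrow> c = c1) \<and> int d dvd int y - (int x1 - c1 * twist \<alpha>) mod int d - c * twist \<alpha>"
proof -
  let ?j = "twist \<alpha>" and ?r = "(int x1 - c1 * twist \<alpha>) mod int d"
  let ?x = "(y + n - x1) mod n" and ?c = "(c + c1) mod 2"
  have c1: "0 \<le> c1" "c1 < 2" "x1 < n"
    using mem_bounds[OF t] by auto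
  have "(c, y, True) \<in> H \<longleftrightarrow> (?c, ?x, False) \<in> H"
    using mult_mem_iff[OF t, of c y True] bounds by simp
  also have "\<dots> \<longleftrightarrow> (\<alpha> = None \<longrightarrow> ?c = 0) \<and> int d dvd int ?x - ?c * ?j"
    using rotations[of ?c ?x None] n_pos by (simp add: mem_param_subgroup_rotation)
  also have "\<dots> \<longleftrightarrow> (\<alpha> = None \<longrightarrow> c = c1) \<and> int d dvd int y - ?r - c * ?j"
  proof -
    have "c = 0 \<or> c = 1" "c1 = 0 \<or> c1 = 1"
      using bounds c1 by auto
    then have c_part: "?c = 0 \<longleftrightarrow> c = c1" by auto
    have rot: "int d dvd int ?x - (int y - int x1)"
      using dvd_dihedral_rotation[OF d(1) c1(3), of True y] by (simp add: refl_sign_def)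
    have r: "int d dvd ?r - (int x1 - c1 * ?j)"
      by (rule mod_eq_dvd_iff[THEN iffD1]) simp
    \<comment> \<open>The two conditions differ by a multiple of \<open>2 j\<close>, which \<open>d\<close> divides.\<close>
    have eq: "(int ?x - ?c * ?j) - (int y - ?r - c * ?j) =
        (int ?x - (int y - int x1)) + (?r - (int x1 - c1 * ?j)) + (c * c1 - c1) * (2 * ?j)"
      using bounds c1 by (simp add: bit_add_mod_2 algebra_simps)
    have "int d dvd int ?x - ?c * ?j \<longleftrightarrow> int d dvd int y - ?r - c * ?j"
      by (rule dvd_iff_dvd_of_dvd_diff, unfold eq)
        (intro dvd_add dvd_mult rot r dvd_twist_params[OF \<alpha>])
    with c_part show ?thesis by simp
  qed
  finally show ?thesis .
qed

lemma reflections: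
  assumes \<alpha>: "\<alpha> \<in> twist_params d"
    and rotations: "\<And>c x \<beta>. (c, x, False) \<in> H \<longleftrightarrow> (c, x, False) \<in> param_subgroup n (d, \<alpha>, \<beta>)"
  obtains \<beta> where "\<beta> \<in> reflection_params d \<alpha>"
    "\<And>c x. (c, x, True) \<in> H \<longleftrightarrow> (c, x, True) \<in> param_subgroup n (d, \<alpha>, \<beta>)"
proof (cases "\<exists>c x. (c, x, True) \<in> H")
  case False
  then show thesis
    by (intro that[of None]) (auto simp: reflection_params_def reflection_not_mem_param_subgroup)
next
  case True
  then obtain c1 x1 where t: "(c1, x1, True) \<in> H" by blast
  define c0 where "c0 = (if \<alpha> = None then c1 else 0)"
  define r where "r = (int x1 - c1 * twist \<alpha>) mod int d"
  have "(c, y, True) \<in> H \<longleftrightarrow> (c, y, True) \<in> param_subgroup n (d, \<alpha>, Some (c0, r))" for c y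
  proof (cases "0 \<le> c \<and> c < 2 \<and> y < n")
    case True
    then show ?thesis
      using reflection_mem_iff[OF \<alpha> rotations t] by (simp add: mem_param_subgroup_Some c0_def r_def)
  qed (auto simp: mem_param_subgroup_Some dest: mem_bounds)
  moreover have "Some (c0, r) \<in> reflection_params d \<alpha>"
    using mem_bounds[OF t] d(2) by (simp add: Some_mem_reflection_params c0_def r_def)
  ultimately show thesis by (intro that)
qed

end

lemma ex_param_subgroup_eq: "\<exists>p\<in>subgroup_params n. H = param_subgroup n p"
proof -
  obtain d where d: "d dvd n" "0 < d" and kernel: "\<And>x. (0, x, False) \<in> H \<longleftrightarrow> x < n \<and> d dvd x"
    using rotation_kernel by blast
  obtain \<alpha> where \<alpha>: "\<alpha> \<in> twist_params d"
    and rotations: "\<And>c x \<beta>. (c, x, False) \<in> H \<longleftrightarrow> (c, x, False) \<in> param_subgroup n (d, \<alpha>, \<beta>)"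
    using rotations[OF d kernel] by blast
  obtain \<beta> where \<beta>: "\<beta> \<in> reflection_params d \<alpha>"
    and reflections: "\<And>c x. (c, x, True) \<in> H \<longleftrightarrow> (c, x, True) \<in> param_subgroup n (d, \<alpha>, \<beta>)"
    using reflections[OF d kernel \<alpha> rotations] by blast
  have "H = param_subgroup n (d, \<alpha>, \<beta>)"
  proof (rule Set.set_eqI)
    fix u :: "int \<times> nat \<times> bool"
    obtain c x a where "u = (c, x, a)" by (cases u)
    then show "u \<in> H \<longleftrightarrow> u \<in> param_subgroup n (d, \<alpha>, \<beta>)"
      using rotations reflections by (cases a) simp_all
  qed
  with d \<alpha> \<beta> show ?thesis by (auto simp: mem_subgroup_params)
qed

end

lemma subgroup_lattice_Z2_dihedral:
  assumes "0 < n"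
  shows "subgroup_lattice (Z2_dihedral n) = param_subgroup n ` subgroup_params n"
  using subgroup_param_subgroup[OF assms]
    Z2_dihedral_subgroup.ex_param_subgroup_eq[OF Z2_dihedral_subgroup.intro[OF assms]]
  unfolding subgroup_lattice_def by blast

lemma card_half_turns:
  assumes "0 < d"
  shows "card (half_turns d) = (if even d then 2 else 1)"
proof -
  have mem: "j \<in> half_turns d \<longleftrightarrow> j = 0 \<or> 2 * j = int d" for j
  proof
    assume "j \<in> half_turns d"
    then obtain k where k: "2 * j = int d * k" "0 \<le> j" "j < int d"
      by (auto simp: half_turns_def elim!: dvdE)
    then have "0 \<le> int d * k" "int d * k < int d * 2" by linarith+
    moreover have "0 < int d" using assms by simp
    ultimately have "0 \<le> k" "k < 2"
      by (simp_all add: zero_le_mult_iff mult_less_cancel_left_pos)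
    then have "k = 0 \<or> k = 1" by auto
    with k show "j = 0 \<or> 2 * j = int d" by auto
  qed (use assms in \<open>auto simp: half_turns_def\<close>)
  show ?thesis
  proof (cases "even d")
    case True
    then obtain h where h: "d = 2 * h" by blast
    with assms mem have "half_turns d = {0, int h}" by auto
    with h assms show ?thesis by simp
  next
    case False
    then have "2 * j \<noteq> int d" for j
      by (metis dvd_triv_left even_of_nat)
    with mem have "half_turns d = {0}" by auto
    with False show ?thesis by simp
  qed
qed

lemma card_reflection_params: "card (reflection_params d \<alpha>) = 1 + (if \<alpha> = None then 2 else 1) * d"
  by (simp add: reflection_params_def card_image card_cartesian_product card_insert_if)

lemma finite_half_turns: "finite (half_turns d)"
  by (rule finite_subset[of _ "{0..<int d}"]) (auto simp: half_turns_def)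

lemma sum_card_reflection_params:
  "(\<Sum>\<alpha>\<in>twist_params d. card (reflection_params d \<alpha>)) = 1 + 2 * d + card (half_turns d) * (1 + d)"
  using finite_half_turns by (simp add: twist_params_def sum.reindex card_reflection_params)

lemma card_subgroup_params:
  assumes "0 < n"
  shows "card (subgroup_params n) = (\<Sum>d | d dvd n. \<Sum>\<alpha>\<in>twist_params d. card (reflection_params d \<alpha>))"
proof -
  have finite: "finite (twist_params d)" "finite (reflection_params d \<alpha>)" for d \<alpha>
    using finite_half_turns by (simp_all add: twist_params_def reflection_params_def)
  have "card (SIGMA \<alpha>:twist_params d. reflection_params d \<alpha>) =
      (\<Sum>\<alpha>\<in>twist_params d. card (reflection_params d \<alpha>))" for d
    using finite by (simp add: card_SigmaI)
  moreover have "finite {d. d dvd n}"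
    using assms by simp
  ultimately show ?thesis
    unfolding subgroup_params_def using finite by (simp add: card_SigmaI finite_SigmaI)
qed

lemma card_subgroup_lattice_Z2_dihedral:
  assumes "0 < n"
  shows "card (subgroup_lattice (Z2_dihedral n)) =
    (\<Sum>d | d dvd n. 1 + 2 * d + (if even d then 2 else 1) * (1 + d))"
proof -
  have "card (subgroup_lattice (Z2_dihedral n)) = card (subgroup_params n)"
    using card_image[OF inj_on_param_subgroup[OF assms]] by (simp add: subgroup_lattice_Z2_dihedral[OF assms])
  also have "\<dots> = (\<Sum>d | d dvd n. \<Sum>\<alpha>\<in>twist_params d. card (reflection_params d \<alpha>))"
    by (rule card_subgroup_params[OF assms])
  also have "\<dots> = (\<Sum>d | d dvd n. 1 + 2 * d + (if even d then 2 else 1) * (1 + d))"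
    using assms by (intro sum.cong) (auto simp: sum_card_reflection_params card_half_turns
        dest: dvd_imp_le)
  finally show ?thesis .
qed

lemma card_subgroup_lattice_Z2_dihedral_power_of_2:
  "int (card (subgroup_lattice (Z2_dihedral (2 ^ k)))) =
     5 * int (sum_divisors (2 ^ k)) + 3 * int (num_divisors (2 ^ k)) - 2 * 2 ^ k - 1"
proof -
  have divisors: "{d. d dvd (2::nat) ^ k} = (\<lambda>e. 2 ^ e) ` {..k}"
    using divides_primepow_nat[of 2] by auto
  have inj: "inj_on (\<lambda>e. (2::nat) ^ e) {..k}"
    by (auto simp: inj_on_def)
  let ?f = "\<lambda>d::nat. 1 + 2 * d + (if even d then 2 else 1) * (1 + d)"
  have "card (subgroup_lattice (Z2_dihedral (2 ^ k))) = (\<Sum>e\<le>k. ?f (2 ^ e))"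
    by (simp add: card_subgroup_lattice_Z2_dihedral divisors sum.reindex[OF inj])
  moreover have "sum_divisors (2 ^ k) = (\<Sum>e\<le>k. 2 ^ e)"
    unfolding sum_divisors_def divisors by (simp add: sum.reindex[OF inj])
  moreover have "num_divisors (2 ^ k) = k + 1"
    unfolding num_divisors_def divisors by (simp add: card_image[OF inj])
  moreover have "int (\<Sum>e\<le>k. ?f (2 ^ e)) = 5 * int (\<Sum>e\<le>k. 2 ^ e) + 3 * int (k + 1) - 2 * 2 ^ k - 1"
    by (induction k) (simp_all add: algebra_simps)
  ultimately show ?thesis by simp
qed

theorem lemma2p3:
  fixes m n' :: nat
  assumes "m \<ge> 2" and "n' = 2 ^ (m - 1)"
  shows "int (card (subgroup_lattice (integer_mod_group 2 \<times>\<times> dihedral_group n'))) =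
         5 * int (sum_divisors n') + 3 * int (num_divisors n') - 2 * int n' - 1"
  \<comment> \<open>The count holds for every power of two.\<close>
  using card_subgroup_lattice_Z2_dihedral_power_of_2[of "m - 1"] assms(2) by simp

end
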